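(* Let $f\colon[a,b]\to\mathbb{R}$ be Laplace integrable on $[a,b]$ and let $F(x)=\int_a^xf$ for $x\in[a,b]$. Then $LD_1F=f$ almost everywhere on $[a,b]$.
   Context: Laplace derivative: for $F$ Perron integrable near $x$, $LD_1F(x)$ is the common value, when both exist and are equal, of $\lim_{s\to\infty}s^2\int_0^\delta e^{-st}[F(x+t)-F(x)]dt$ and $\lim_{s\to\infty}(-s^2)\int_0^\delta e^{-st}[F(x-t)-F(x)]dt$ for some $\delta>0$ (one-sided at endpoints). Lower/upper derivates $\underline{LD}_1,\overline{LD}_1$ use $\liminf$/$\limsup$, minimum/maximum over the two sides. Laplace integral: a major function of $f$ is a continuous $U$ on $[a,b]$ with $\underline{LD}_1U\geqslant f$ and $\underline{LD}_1U>-\infty$ everywhere; a minor function is a continuous $V$ with $\overline{LD}_1V\leqslant f$ and $\overline{LD}_1V<\infty$ everywhere; $f$ is Laplace integrable if $\sup_V(V(b)-V(a))=\inf_U(U(b)-U(a))$ is finite, the value being $\int_a^bf$. *)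

theory Defs
  imports "HOL-Analysis.Analysis"
begin

definition lap_right :: "(real \<Rightarrow> real) \<Rightarrow> real \<Rightarrow> real \<Rightarrow> real \<Rightarrow> real" where
  "lap_right F x d s = s\<^sup>2 * integral {0..d} (\<lambda>t. exp (- (s * t)) * (F (x + t) - F x))"

definition lap_left :: "(real \<Rightarrow> real) \<Rightarrow> real \<Rightarrow> real \<Rightarrow> real \<Rightarrow> real" where
  "lap_left F x d s = - (s\<^sup>2) * integral {0..d} (\<lambda>t. exp (- (s * t)) * (F (x - t) - F x))"

text \<open>F has first Laplace derivative L at x, relative to [a,b] (one-sided at endpoints).
  Perron integrability = Henstock-Kurzweil integrability (integrable_on).\<close>

definition has_LD :: "(real \<Rightarrow> real) \<Rightarrow> real \<Rightarrow> real \<Rightarrow> real \<Rightarrow> real \<Rightarrow> bool" where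
  "has_LD F a b x L \<longleftrightarrow> x \<in> {a..b} \<and>
     (\<exists>d>0.
        (x < b \<longrightarrow> x + d \<le> b \<and> F integrable_on {x..x+d} \<and>
                    (lap_right F x d \<longlongrightarrow> L) at_top) \<and>
        (a < x \<longrightarrow> a \<le> x - d \<and> F integrable_on {x-d..x} \<and>
                    (lap_left F x d \<longlongrightarrow> L) at_top))"

text \<open>The window used is the
  maximal one inside [a,b] (the liminf/limsup does not depend on the window for
  functions integrable on it, e.g. continuous functions).\<close>

definition lower_LD :: "(real \<Rightarrow> real) \<Rightarrow> real \<Rightarrow> real \<Rightarrow> real \<Rightarrow> ereal" where
  "lower_LD F a b x =
     (if x = a then Liminf at_top (\<lambda>s. ereal (lap_right F x (b - x) s))
      else if x = b then Liminf at_top (\<lambda>s. ereal (lap_left F x (x - a) s))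
      else min (Liminf at_top (\<lambda>s. ereal (lap_right F x (b - x) s)))
               (Liminf at_top (\<lambda>s. ereal (lap_left F x (x - a) s))))"

definition upper_LD :: "(real \<Rightarrow> real) \<Rightarrow> real \<Rightarrow> real \<Rightarrow> real \<Rightarrow> ereal" where
  "upper_LD F a b x =
     (if x = a then Limsup at_top (\<lambda>s. ereal (lap_right F x (b - x) s))
      else if x = b then Limsup at_top (\<lambda>s. ereal (lap_left F x (x - a) s))
      else max (Limsup at_top (\<lambda>s. ereal (lap_right F x (b - x) s)))
               (Limsup at_top (\<lambda>s. ereal (lap_left F x (x - a) s))))"

definition laplace_major :: "(real \<Rightarrow> real) \<Rightarrow> real \<Rightarrow> real \<Rightarrow> (real \<Rightarrow> real) \<Rightarrow> bool" where
  "laplace_major f a b U \<longleftrightarrow> continuous_on {a..b} U \<and>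
     (\<forall>x\<in>{a..b}. lower_LD U a b x \<ge> ereal (f x) \<and> lower_LD U a b x > -\<infinity>)"

definition laplace_minor :: "(real \<Rightarrow> real) \<Rightarrow> real \<Rightarrow> real \<Rightarrow> (real \<Rightarrow> real) \<Rightarrow> bool" where
  "laplace_minor f a b V \<longleftrightarrow> continuous_on {a..b} V \<and>
     (\<forall>x\<in>{a..b}. upper_LD V a b x \<le> ereal (f x) \<and> upper_LD V a b x < \<infinity>)"

definition laplace_upper :: "(real \<Rightarrow> real) \<Rightarrow> real \<Rightarrow> real \<Rightarrow> ereal" where
  "laplace_upper f a b = (INF U\<in>{U. laplace_major f a b U}. ereal (U b - U a))"

definition laplace_lower :: "(real \<Rightarrow> real) \<Rightarrow> real \<Rightarrow> real \<Rightarrow> ereal" where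
  "laplace_lower f a b = (SUP V\<in>{V. laplace_minor f a b V}. ereal (V b - V a))"

definition laplace_integrable :: "(real \<Rightarrow> real) \<Rightarrow> real \<Rightarrow> real \<Rightarrow> bool" where
  "laplace_integrable f a b \<longleftrightarrow>
     laplace_lower f a b = laplace_upper f a b \<and> \<bar>laplace_upper f a b\<bar> \<noteq> \<infinity>"

definition laplace_integral :: "(real \<Rightarrow> real) \<Rightarrow> real \<Rightarrow> real \<Rightarrow> real" where
  "laplace_integral f a b = real_of_ereal (laplace_upper f a b)"

end

theory Submission
  imports Defs "HOL-Real_Asymp.Real_Asymp"
begin

text \<open>For a major function \<open>U\<close> and a minor function \<open>V\<close> both \<open>U - F\<close> and \<open>F - V\<close> are
  nondecreasing, and the gap \<open>(U b - U a) - (V b - V a)\<close> can be made arbitrarily small.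
  A Vitali covering argument bounds the outer measure of the points where a nondecreasing \<open>G\<close> has
  symmetric difference quotients above \<open>\<eta>\<close> arbitrarily close to \<open>0\<close> by \<open>2 (G b - G a) / \<eta>\<close>;
  so for each \<open>\<eta> > 0\<close> the points where \<open>U - F\<close> or \<open>F - V\<close> is steep for every pair form a null
  set. At any other point the Laplace transforms of \<open>U - F\<close> and \<open>F - V\<close> are eventually below
  \<open>\<eta> + \<epsilon>\<close>, so those of \<open>F\<close> are squeezed between the lower Laplace derivate of \<open>U\<close> and the upper
  one of \<open>V\<close>, which bracket \<open>f x\<close>.\<close>

section \<open>Laplace transforms of increments\<close>

lemma continuous_on_lap_integrand:
  fixes F :: "real \<Rightarrow> real"
  assumes "continuous_on {x..x+d} F"
  shows "continuous_on {0..d} (\<lambda>t. exp (- (s * t)) * (F (x + t) - F x))"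
proof -
  have "continuous_on {0..d} (\<lambda>t. F (x + t))"
    by (rule continuous_on_compose2[OF assms], intro continuous_intros) auto
  then show ?thesis
    by (intro continuous_intros)
qed

lemma lap_integrand_integrable:
  fixes F :: "real \<Rightarrow> real"
  assumes "continuous_on {x..x+d} F" "0 \<le> u" "v \<le> d"
  shows "(\<lambda>t. exp (- (s * t)) * (F (x + t) - F x)) integrable_on {u..v}"
  by (rule integrable_continuous_interval,
      rule continuous_on_subset[OF continuous_on_lap_integrand[OF assms(1)]]) (use assms in auto)

lemma lap_right_add:
  assumes "continuous_on {x..x+d} F" "continuous_on {x..x+d} G"
  shows "lap_right (\<lambda>y. F y + G y) x d s = lap_right F x d s + lap_right G x d s"
proof -
  have "integral {0..d} (\<lambda>t. exp (- (s * t)) * (F (x + t) - F x) + exp (- (s * t)) * (G (x + t) - G x))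
     = integral {0..d} (\<lambda>t. exp (- (s * t)) * (F (x + t) - F x))
       + integral {0..d} (\<lambda>t. exp (- (s * t)) * (G (x + t) - G x))"
    by (intro integral_add lap_integrand_integrable[OF assms(1)] lap_integrand_integrable[OF assms(2)]) auto
  moreover have "(\<lambda>t. exp (- (s * t)) * ((F (x + t) + G (x + t)) - (F x + G x)))
    = (\<lambda>t. exp (- (s * t)) * (F (x + t) - F x) + exp (- (s * t)) * (G (x + t) - G x))"
    by (auto simp: algebra_simps)
  ultimately show ?thesis
    unfolding lap_right_def by (simp add: distrib_left)
qed

lemma lap_right_diff:
  assumes "continuous_on {x..x+d} F" "continuous_on {x..x+d} G"
  shows "lap_right (\<lambda>y. F y - G y) x d s = lap_right F x d s - lap_right G x d s"
proof -
  have "integral {0..d} (\<lambda>t. exp (- (s * t)) * (F (x + t) - F x) - exp (- (s * t)) * (G (x + t) - G x))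
     = integral {0..d} (\<lambda>t. exp (- (s * t)) * (F (x + t) - F x))
       - integral {0..d} (\<lambda>t. exp (- (s * t)) * (G (x + t) - G x))"
    by (intro integral_diff lap_integrand_integrable[OF assms(1)] lap_integrand_integrable[OF assms(2)]) auto
  moreover have "(\<lambda>t. exp (- (s * t)) * ((F (x + t) - G (x + t)) - (F x - G x)))
    = (\<lambda>t. exp (- (s * t)) * (F (x + t) - F x) - exp (- (s * t)) * (G (x + t) - G x))"
    by (auto simp: algebra_simps)
  ultimately show ?thesis
    unfolding lap_right_def by (simp add: right_diff_distrib)
qed

lemma lap_right_mono:
  assumes "continuous_on {x..x+d} F" "continuous_on {x..x+d} G"
    and "\<And>t. t \<in> {0..d} \<Longrightarrow> F (x + t) - F x \<le> G (x + t) - G x"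
  shows "lap_right F x d s \<le> lap_right G x d s"
proof -
  have "integral {0..d} (\<lambda>t. exp (- (s * t)) * (F (x + t) - F x))
     \<le> integral {0..d} (\<lambda>t. exp (- (s * t)) * (G (x + t) - G x))"
    by (intro integral_le lap_integrand_integrable[OF assms(1)] lap_integrand_integrable[OF assms(2)]
        mult_left_mono assms(3)) auto
  then show ?thesis
    unfolding lap_right_def by (simp add: mult_left_mono)
qed

lemma lap_right_linear:
  assumes "s > 0" "d \<ge> 0"
  shows "lap_right (\<lambda>y. c * y) x d s = c * (1 - exp (- (s * d)) * (s * d + 1))"
proof -
  define P where "P t = - (t / s + 1 / s\<^sup>2) * exp (- (s * t))" for t
  have "((\<lambda>t. exp (- (s * t)) * t) has_integral (P d - P 0)) {0..d}"
  proof (rule fundamental_theorem_of_calculus[OF assms(2)])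
    fix t assume "t \<in> {0..d}"
    have "(P has_real_derivative exp (- (s * t)) * t) (at t within {0..d})"
      unfolding P_def using assms
      by (auto intro!: derivative_eq_intros simp: field_simps power2_eq_square)
    then show "(P has_vector_derivative exp (- (s * t)) * t) (at t within {0..d})"
      by (simp add: has_real_derivative_iff_has_vector_derivative)
  qed
  then have "integral {0..d} (\<lambda>t. exp (- (s * t)) * t) = P d - P 0"
    by (rule integral_unique)
  moreover have "(\<lambda>t. exp (- (s * t)) * (c * (x + t) - c * x)) = (\<lambda>t. c * (exp (- (s * t)) * t))"
    by (auto simp: algebra_simps)
  ultimately have "lap_right (\<lambda>y. c * y) x d s = s\<^sup>2 * (c * (P d - P 0))"
    unfolding lap_right_def by simp
  also have "\<dots> = c * (1 - exp (- (s * d)) * (s * d + 1))"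
    unfolding P_def using assms by (simp add: field_simps power2_eq_square)
  finally show ?thesis .
qed

lemma tendsto_lap_right_linear:
  assumes "d > 0"
  shows "((\<lambda>s. lap_right (\<lambda>y. c * y) x d s) \<longlongrightarrow> c) at_top"
proof -
  have "((\<lambda>s. 1 - exp (- (s * d)) * (s * d + 1)) \<longlongrightarrow> 1) at_top"
    using assms by real_asymp
  then have "((\<lambda>s. c * (1 - exp (- (s * d)) * (s * d + 1))) \<longlongrightarrow> c * 1) at_top"
    by (intro tendsto_intros)
  moreover have "\<forall>\<^sub>F s in at_top. c * (1 - exp (- (s * d)) * (s * d + 1)) = lap_right (\<lambda>y. c * y) x d s"
    using eventually_gt_at_top[of 0] by eventually_elim (use lap_right_linear assms in auto)
  ultimately show ?thesis
    by (simp add: tendsto_cong)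
qed

lemma lap_right_le_if_increment_le:
  assumes "continuous_on {x..x+d} F" "0 \<le> d" "s > 0" "\<eta> \<ge> 0"
    and "\<And>t. t \<in> {0..d} \<Longrightarrow> F (x + t) - F x \<le> \<eta> * t"
  shows "lap_right F x d s \<le> \<eta>"
proof -
  have "lap_right F x d s \<le> lap_right (\<lambda>y. \<eta> * y) x d s"
    by (rule lap_right_mono[OF assms(1) continuous_on_mult_left[OF continuous_on_id]])
       (use assms(5) in \<open>simp add: algebra_simps\<close>)
  also have "\<dots> = \<eta> * (1 - exp (- (s * d)) * (s * d + 1))"
    by (rule lap_right_linear) (use assms in auto)
  also have "\<dots> \<le> \<eta>"
  proof (rule mult_left_le)
    have "0 \<le> s * d"
      using assms(2,3) by simp
    then show "1 - exp (- (s * d)) * (s * d + 1) \<le> 1"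
      by simp
  qed (use assms(4) in simp)
  finally show ?thesis .
qed

lemma lap_right_window_difference:
  fixes F :: "real \<Rightarrow> real"
  assumes F: "continuous_on {x..x+d} F" and e: "0 \<le> e" "e \<le> d"
  shows "lap_right F x d s - lap_right F x e s
    = s\<^sup>2 * integral {e..d} (\<lambda>t. exp (- (s * t)) * (F (x + t) - F x))"
proof -
  let ?k = "\<lambda>t. exp (- (s * t)) * (F (x + t) - F x)"
  have "integral {0..e} ?k + integral {e..d} ?k = integral {0..d} ?k"
    by (rule Henstock_Kurzweil_Integration.integral_combine)
       (use e lap_integrand_integrable[OF F, of 0 d] in auto)
  then have "integral {0..d} ?k - integral {0..e} ?k = integral {e..d} ?k"
    by simp
  then show ?thesis
    unfolding lap_right_def by (simp flip: right_diff_distrib)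
qed

lemma abs_lap_right_window_difference_le:
  fixes F :: "real \<Rightarrow> real"
  assumes F: "continuous_on {x..x+d} F" and B: "\<And>y. y \<in> {x..x+d} \<Longrightarrow> \<bar>F y\<bar> \<le> B"
    and e: "0 \<le> e" "e \<le> d" and s: "0 \<le> s"
  shows "\<bar>lap_right F x d s - lap_right F x e s\<bar> \<le> s\<^sup>2 * exp (- (s * e)) * (2 * B * (d - e))"
proof -
  let ?k = "\<lambda>t. exp (- (s * t)) * (F (x + t) - F x)"
  have "norm (?k t) \<le> exp (- (s * e)) * (2 * B)" if t: "t \<in> {e..d}" for t
  proof -
    have "\<bar>F (x + t) - F x\<bar> \<le> 2 * B"
      using B[of "x + t"] B[of x] t e by auto
    moreover have "exp (- (s * t)) \<le> exp (- (s * e))"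
      using t s by (auto intro: mult_left_mono)
    ultimately show ?thesis
      by (simp add: abs_mult) (rule mult_mono, auto)
  qed
  moreover have "continuous_on {e..d} ?k"
    by (rule continuous_on_subset[OF continuous_on_lap_integrand[OF F]]) (use e in auto)
  ultimately have I: "norm (integral {e..d} ?k) \<le> exp (- (s * e)) * (2 * B) * (d - e)"
    using e by (intro integral_bound) auto
  have "\<bar>lap_right F x d s - lap_right F x e s\<bar> = s\<^sup>2 * norm (integral {e..d} ?k)"
    unfolding lap_right_window_difference[OF F e] by (simp add: abs_mult)
  also have "\<dots> \<le> s\<^sup>2 * (exp (- (s * e)) * (2 * B) * (d - e))"
    by (rule mult_left_mono[OF I]) simp
  finally show ?thesis
    by (simp only: mult_ac)
qed

lemma tendsto_lap_right_window:
  fixes F :: "real \<Rightarrow> real"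
  assumes F: "continuous_on {x..x+d} F" and e: "0 < e" "e \<le> d"
  shows "((\<lambda>s. lap_right F x d s - lap_right F x e s) \<longlongrightarrow> 0) at_top"
proof -
  have "compact (F ` {x..x+d})"
    by (rule compact_continuous_image[OF F]) auto
  then obtain B where B: "\<And>y. y \<in> {x..x+d} \<Longrightarrow> \<bar>F y\<bar> \<le> B"
    using compact_imp_bounded bounded_pos by (metis image_eqI real_norm_def)
  have "((\<lambda>s. s\<^sup>2 * exp (- (s * e))) \<longlongrightarrow> 0) at_top"
    using e by real_asymp
  then have "((\<lambda>s. s\<^sup>2 * exp (- (s * e)) * (2 * B * (d - e))) \<longlongrightarrow> 0 * (2 * B * (d - e))) at_top"
    by (intro tendsto_intros)
  then have lim: "((\<lambda>s. s\<^sup>2 * exp (- (s * e)) * (2 * B * (d - e))) \<longlongrightarrow> 0) at_top"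
    by (simp only: mult_zero_left)
  have "\<forall>\<^sub>F s in at_top. \<bar>lap_right F x d s - lap_right F x e s\<bar>
      \<le> s\<^sup>2 * exp (- (s * e)) * (2 * B * (d - e))"
    using eventually_ge_at_top[of 0]
    by (rule eventually_mono) (rule abs_lap_right_window_difference_le[OF F B less_imp_le[OF e(1)] e(2)])
  then have "\<forall>\<^sub>F s in at_top. norm (lap_right F x d s - lap_right F x e s)
      \<le> s\<^sup>2 * exp (- (s * e)) * (2 * B * (d - e))"
    by simp
  from Lim_null_comparison[OF this lim] show ?thesis .
qed

lemma lap_left_eq_lap_right_reflect: "lap_left F x d s = lap_right (\<lambda>y. - F (- y)) (- x) d s"
proof -
  have "(\<lambda>t. exp (- (s * t)) * (- F (- (- x + t)) - - F (- (- x))))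
      = (\<lambda>t. - (exp (- (s * t)) * (F (x - t) - F x)))"
    by (auto simp: algebra_simps)
  then show ?thesis
    unfolding lap_left_def lap_right_def by (simp add: integral_neg)
qed

lemma continuous_on_reflect:
  fixes F :: "real \<Rightarrow> real"
  assumes "continuous_on {a..b} F" "{u..v} \<subseteq> {-b..-a}"
  shows "continuous_on {u..v} (\<lambda>y. - F (- y))"
proof -
  have "continuous_on {u..v} (\<lambda>y. F (- y))"
    by (rule continuous_on_compose2[OF assms(1)], intro continuous_intros) (use assms(2) in auto)
  then show ?thesis
    by (intro continuous_intros)
qed

section \<open>Lower and upper Laplace derivates\<close>

lemma ereal_le_Liminf_iff:
  fixes u :: "'a \<Rightarrow> real"
  shows "ereal c \<le> Liminf F (\<lambda>s. ereal (u s)) \<longleftrightarrow> (\<forall>\<epsilon>>0. \<forall>\<^sub>F s in F. c - \<epsilon> < u s)"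
proof -
  have "(\<forall>y<ereal c. \<forall>\<^sub>F s in F. y < ereal (u s)) \<longleftrightarrow> (\<forall>\<epsilon>>0. \<forall>\<^sub>F s in F. c - \<epsilon> < u s)"
  proof safe
    fix \<epsilon> :: real assume "\<forall>y<ereal c. \<forall>\<^sub>F s in F. y < ereal (u s)" "\<epsilon> > 0"
    moreover have "ereal (c - \<epsilon>) < ereal c"
      using \<open>\<epsilon> > 0\<close> by simp
    ultimately have "\<forall>\<^sub>F s in F. ereal (c - \<epsilon>) < ereal (u s)"
      by blast
    then show "\<forall>\<^sub>F s in F. c - \<epsilon> < u s"
      by simp
  next
    fix y assume *: "\<forall>\<epsilon>>0. \<forall>\<^sub>F s in F. c - \<epsilon> < u s" "y < ereal c"
    show "\<forall>\<^sub>F s in F. y < ereal (u s)"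
    proof (cases y)
      case (real r)
      with *(2) have "c - r > 0"
        by simp
      with *(1) have "\<forall>\<^sub>F s in F. c - (c - r) < u s"
        by blast
      then show ?thesis
        using real by simp
    next
      case PInf
      with *(2) show ?thesis
        by simp
    next
      case MInf
      then show ?thesis
        by simp
    qed
  qed
  then show ?thesis
    by (simp add: le_Liminf_iff)
qed

lemma Limsup_le_ereal_iff:
  fixes u :: "'a \<Rightarrow> real"
  shows "Limsup F (\<lambda>s. ereal (u s)) \<le> ereal c \<longleftrightarrow> (\<forall>\<epsilon>>0. \<forall>\<^sub>F s in F. u s < c + \<epsilon>)"
proof -
  have "Liminf F (\<lambda>s. ereal (- u s)) = - Limsup F (\<lambda>s. ereal (u s))"
    using ereal_Liminf_uminus[of F "\<lambda>s. ereal (u s)"] by simp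
  moreover have "Limsup F (\<lambda>s. ereal (u s)) \<le> ereal c \<longleftrightarrow> - ereal c \<le> - Limsup F (\<lambda>s. ereal (u s))"
    by (rule ereal_minus_le_minus[symmetric])
  ultimately have "Limsup F (\<lambda>s. ereal (u s)) \<le> ereal c \<longleftrightarrow> ereal (- c) \<le> Liminf F (\<lambda>s. ereal (- u s))"
    by simp
  also have "\<dots> \<longleftrightarrow> (\<forall>\<epsilon>>0. \<forall>\<^sub>F s in F. - c - \<epsilon> < - u s)"
    by (rule ereal_le_Liminf_iff)
  also have "\<dots> \<longleftrightarrow> (\<forall>\<epsilon>>0. \<forall>\<^sub>F s in F. u s < c + \<epsilon>)"
  proof -
    have "(- c - \<epsilon> < - u s) \<longleftrightarrow> (u s < c + \<epsilon>)" for \<epsilon> s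
      by linarith
    then show ?thesis
      by (simp only:)
  qed
  finally show ?thesis .
qed

lemma Liminf_lap_right_smaller_window:
  assumes "continuous_on {x..x+w} U" "0 < e" "e \<le> w"
    and "ereal c \<le> Liminf at_top (\<lambda>s. ereal (lap_right U x w s))"
  shows "ereal c \<le> Liminf at_top (\<lambda>s. ereal (lap_right U x e s))"
  unfolding ereal_le_Liminf_iff
proof safe
  fix \<epsilon> :: real assume \<epsilon>: "\<epsilon> > 0"
  have "\<forall>\<^sub>F s in at_top. c - \<epsilon>/2 < lap_right U x w s"
    using assms(4) \<epsilon> unfolding ereal_le_Liminf_iff by simp
  moreover have "\<forall>\<^sub>F s in at_top. lap_right U x w s - lap_right U x e s < \<epsilon>/2"
    using order_tendstoD(2)[OF tendsto_lap_right_window[OF assms(1-3)], of "\<epsilon>/2"] \<epsilon> by simp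
  ultimately show "\<forall>\<^sub>F s in at_top. c - \<epsilon> < lap_right U x e s"
    by eventually_elim simp
qed

lemma Limsup_lap_right_smaller_window:
  assumes "continuous_on {x..x+w} U" "0 < e" "e \<le> w"
    and "Limsup at_top (\<lambda>s. ereal (lap_right U x w s)) \<le> ereal c"
  shows "Limsup at_top (\<lambda>s. ereal (lap_right U x e s)) \<le> ereal c"
  unfolding Limsup_le_ereal_iff
proof safe
  fix \<epsilon> :: real assume \<epsilon>: "\<epsilon> > 0"
  have "\<forall>\<^sub>F s in at_top. lap_right U x w s < c + \<epsilon>/2"
    using assms(4) \<epsilon> unfolding Limsup_le_ereal_iff by simp
  moreover have "\<forall>\<^sub>F s in at_top. - (\<epsilon>/2) < lap_right U x w s - lap_right U x e s"
    using order_tendstoD(1)[OF tendsto_lap_right_window[OF assms(1-3)], of "- (\<epsilon>/2)"] \<epsilon> by simp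
  ultimately show "\<forall>\<^sub>F s in at_top. lap_right U x e s < c + \<epsilon>"
    by eventually_elim simp
qed

lemma laplace_major_iff:
  assumes "a < b"
  shows "laplace_major f a b U \<longleftrightarrow> continuous_on {a..b} U \<and>
    (\<forall>y\<in>{a..<b}. ereal (f y) \<le> Liminf at_top (\<lambda>s. ereal (lap_right U y (b - y) s))) \<and>
    (\<forall>y\<in>{a<..b}. ereal (f y) \<le> Liminf at_top (\<lambda>s. ereal (lap_left U y (y - a) s)))"
    (is "_ \<longleftrightarrow> _ \<and> (\<forall>y\<in>_. ?R y) \<and> (\<forall>y\<in>_. ?L y)")
proof -
  have pointwise: "ereal (f y) \<le> lower_LD U a b y \<and> - \<infinity> < lower_LD U a b y \<longleftrightarrow>
      (y < b \<longrightarrow> ?R y) \<and> (a < y \<longrightarrow> ?L y)" if y: "y \<in> {a..b}" for y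
  proof -
    have "ereal (f y) \<le> lower_LD U a b y \<longleftrightarrow> (y < b \<longrightarrow> ?R y) \<and> (a < y \<longrightarrow> ?L y)"
      using assms y unfolding lower_LD_def by (cases "y = a"; cases "y = b") simp_all
    moreover have "ereal (f y) \<le> lower_LD U a b y \<Longrightarrow> - \<infinity> < lower_LD U a b y"
      by (cases "lower_LD U a b y") auto
    ultimately show ?thesis
      by blast
  qed
  have "(\<forall>y\<in>{a..b}. ereal (f y) \<le> lower_LD U a b y \<and> - \<infinity> < lower_LD U a b y) \<longleftrightarrow>
      (\<forall>y\<in>{a..b}. (y < b \<longrightarrow> ?R y) \<and> (a < y \<longrightarrow> ?L y))"
    by (rule ball_cong[OF refl pointwise])
  also have "\<dots> \<longleftrightarrow> (\<forall>y\<in>{a..<b}. ?R y) \<and> (\<forall>y\<in>{a<..b}. ?L y)"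
    by auto
  finally show ?thesis
    unfolding laplace_major_def by simp
qed

lemma laplace_minor_iff:
  assumes "a < b"
  shows "laplace_minor f a b V \<longleftrightarrow> continuous_on {a..b} V \<and>
    (\<forall>y\<in>{a..<b}. Limsup at_top (\<lambda>s. ereal (lap_right V y (b - y) s)) \<le> ereal (f y)) \<and>
    (\<forall>y\<in>{a<..b}. Limsup at_top (\<lambda>s. ereal (lap_left V y (y - a) s)) \<le> ereal (f y))"
    (is "_ \<longleftrightarrow> _ \<and> (\<forall>y\<in>_. ?R y) \<and> (\<forall>y\<in>_. ?L y)")
proof -
  have pointwise: "upper_LD V a b y \<le> ereal (f y) \<and> upper_LD V a b y < \<infinity> \<longleftrightarrow>
      (y < b \<longrightarrow> ?R y) \<and> (a < y \<longrightarrow> ?L y)" if y: "y \<in> {a..b}" for y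
  proof -
    have "upper_LD V a b y \<le> ereal (f y) \<longleftrightarrow> (y < b \<longrightarrow> ?R y) \<and> (a < y \<longrightarrow> ?L y)"
      using assms y unfolding upper_LD_def by (cases "y = a"; cases "y = b") simp_all
    moreover have "upper_LD V a b y \<le> ereal (f y) \<Longrightarrow> upper_LD V a b y < \<infinity>"
      by (cases "upper_LD V a b y") auto
    ultimately show ?thesis
      by blast
  qed
  have "(\<forall>y\<in>{a..b}. upper_LD V a b y \<le> ereal (f y) \<and> upper_LD V a b y < \<infinity>) \<longleftrightarrow>
      (\<forall>y\<in>{a..b}. (y < b \<longrightarrow> ?R y) \<and> (a < y \<longrightarrow> ?L y))"
    by (rule ball_cong[OF refl pointwise])
  also have "\<dots> \<longleftrightarrow> (\<forall>y\<in>{a..<b}. ?R y) \<and> (\<forall>y\<in>{a<..b}. ?L y)"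
    by auto
  finally show ?thesis
    unfolding laplace_minor_def by simp
qed

lemma laplace_major_Liminf_lap_right:
  assumes "laplace_major f a b U" "a < b" "x \<in> {a..<b}" "0 < d" "d \<le> b - x"
  shows "ereal (f x) \<le> Liminf at_top (\<lambda>s. ereal (lap_right U x d s))"
proof -
  from assms(1) have U: "continuous_on {a..b} U"
    and R: "\<forall>y\<in>{a..<b}. ereal (f y) \<le> Liminf at_top (\<lambda>s. ereal (lap_right U y (b - y) s))"
    unfolding laplace_major_iff[OF assms(2)] by simp_all
  have "continuous_on {x..x + (b - x)} U"
    by (rule continuous_on_subset[OF U]) (use assms(3) in auto)
  from Liminf_lap_right_smaller_window[OF this assms(4,5) bspec[OF R assms(3)]] show ?thesis .
qed

lemma laplace_major_Liminf_lap_left: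
  assumes "laplace_major f a b U" "a < b" "x \<in> {a<..b}" "0 < d" "d \<le> x - a"
  shows "ereal (f x) \<le> Liminf at_top (\<lambda>s. ereal (lap_right (\<lambda>y. - U (- y)) (- x) d s))"
proof -
  from assms(1) have U: "continuous_on {a..b} U"
    and L: "\<forall>y\<in>{a<..b}. ereal (f y) \<le> Liminf at_top (\<lambda>s. ereal (lap_left U y (y - a) s))"
    unfolding laplace_major_iff[OF assms(2)] by simp_all
  have "continuous_on {- x..- x + (x - a)} (\<lambda>y. - U (- y))"
    by (rule continuous_on_reflect[OF U]) (use assms(3) in auto)
  from Liminf_lap_right_smaller_window[OF this assms(4,5)] bspec[OF L assms(3)] show ?thesis
    unfolding lap_left_eq_lap_right_reflect by simp
qed

lemma laplace_minor_Limsup_lap_right: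
  assumes "laplace_minor f a b V" "a < b" "x \<in> {a..<b}" "0 < d" "d \<le> b - x"
  shows "Limsup at_top (\<lambda>s. ereal (lap_right V x d s)) \<le> ereal (f x)"
proof -
  from assms(1) have V: "continuous_on {a..b} V"
    and R: "\<forall>y\<in>{a..<b}. Limsup at_top (\<lambda>s. ereal (lap_right V y (b - y) s)) \<le> ereal (f y)"
    unfolding laplace_minor_iff[OF assms(2)] by simp_all
  have "continuous_on {x..x + (b - x)} V"
    by (rule continuous_on_subset[OF V]) (use assms(3) in auto)
  from Limsup_lap_right_smaller_window[OF this assms(4,5) bspec[OF R assms(3)]] show ?thesis .
qed

lemma laplace_minor_Limsup_lap_left:
  assumes "laplace_minor f a b V" "a < b" "x \<in> {a<..b}" "0 < d" "d \<le> x - a"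
  shows "Limsup at_top (\<lambda>s. ereal (lap_right (\<lambda>y. - V (- y)) (- x) d s)) \<le> ereal (f x)"
proof -
  from assms(1) have V: "continuous_on {a..b} V"
    and L: "\<forall>y\<in>{a<..b}. Limsup at_top (\<lambda>s. ereal (lap_left V y (y - a) s)) \<le> ereal (f y)"
    unfolding laplace_minor_iff[OF assms(2)] by simp_all
  have "continuous_on {- x..- x + (x - a)} (\<lambda>y. - V (- y))"
    by (rule continuous_on_reflect[OF V]) (use assms(3) in auto)
  from Limsup_lap_right_smaller_window[OF this assms(4,5)] bspec[OF L assms(3)] show ?thesis
    unfolding lap_left_eq_lap_right_reflect by simp
qed

lemma laplace_major_restrict:
  assumes U: "laplace_major f a b U" and x: "a < x" "x \<le> b"
  shows "laplace_major f a x U"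
proof -
  have ab: "a < b"
    using x by simp
  from U have cont: "continuous_on {a..b} U"
    and L: "\<forall>y\<in>{a<..b}. ereal (f y) \<le> Liminf at_top (\<lambda>s. ereal (lap_left U y (y - a) s))"
    unfolding laplace_major_iff[OF ab] by simp_all
  show ?thesis
    unfolding laplace_major_iff[OF x(1)]
  proof (intro conjI ballI)
    show "continuous_on {a..x} U"
      by (rule continuous_on_subset[OF cont]) (use x in auto)
  next
    fix y assume "y \<in> {a..<x}"
    then show "ereal (f y) \<le> Liminf at_top (\<lambda>s. ereal (lap_right U y (x - y) s))"
      by (intro laplace_major_Liminf_lap_right[OF U ab]) (use x in auto)
  next
    fix y assume "y \<in> {a<..x}"
    then show "ereal (f y) \<le> Liminf at_top (\<lambda>s. ereal (lap_left U y (y - a) s))"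
      using L x by simp
  qed
qed

lemma laplace_minor_restrict:
  assumes V: "laplace_minor f a b V" and x: "a < x" "x \<le> b"
  shows "laplace_minor f a x V"
proof -
  have ab: "a < b"
    using x by simp
  from V have cont: "continuous_on {a..b} V"
    and L: "\<forall>y\<in>{a<..b}. Limsup at_top (\<lambda>s. ereal (lap_left V y (y - a) s)) \<le> ereal (f y)"
    unfolding laplace_minor_iff[OF ab] by simp_all
  show ?thesis
    unfolding laplace_minor_iff[OF x(1)]
  proof (intro conjI ballI)
    show "continuous_on {a..x} V"
      by (rule continuous_on_subset[OF cont]) (use x in auto)
  next
    fix y assume "y \<in> {a..<x}"
    then show "Limsup at_top (\<lambda>s. ereal (lap_right V y (x - y) s)) \<le> ereal (f y)"
      by (intro laplace_minor_Limsup_lap_right[OF V ab]) (use x in auto)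
  next
    fix y assume "y \<in> {a<..x}"
    then show "Limsup at_top (\<lambda>s. ereal (lap_left V y (y - a) s)) \<le> ereal (f y)"
      using L x by simp
  qed
qed

section \<open>Monotonicity from Laplace derivates\<close>

lemma lap_right_const [simp]: "lap_right (\<lambda>_. c) x d s = 0"
  unfolding lap_right_def by simp

text \<open>At an interior maximum point \<open>x\<^sub>0 < d\<close> of \<open>H\<close> on \<open>[c, d]\<close> the transform over the window
  \<open>d - x\<^sub>0\<close> is \<open>\<le> 0\<close>, and the rest of the window contributes \<open>o(1)\<close>.\<close>

lemma mono_on_if_lap_right_eventually_pos:
  fixes H :: "real \<Rightarrow> real"
  assumes H: "continuous_on {a..b} H"
    and pos: "\<And>y. y \<in> {a..<b} \<Longrightarrow> \<exists>\<epsilon>>0. \<forall>\<^sub>F s in at_top. \<epsilon> < lap_right H y (b - y) s"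
  shows "mono_on {a..b} H"
proof (rule mono_onI)
  fix c d assume cd: "c \<in> {a..b}" "d \<in> {a..b}" "c \<le> d"
  show "H c \<le> H d"
  proof (rule ccontr)
    assume less: "\<not> H c \<le> H d"
    have "continuous_on {c..d} H"
      by (rule continuous_on_subset[OF H]) (use cd in auto)
    then obtain x0 where x0: "x0 \<in> {c..d}" and max: "\<And>y. y \<in> {c..d} \<Longrightarrow> H y \<le> H x0"
      using continuous_attains_sup[of "{c..d}" H] cd(3) by auto
    have "x0 \<noteq> d"
      using max[of c] less cd(3) by auto
    with x0 have x0d: "x0 < d"
      by simp
    obtain \<epsilon> where \<epsilon>: "\<epsilon> > 0" and big: "\<forall>\<^sub>F s in at_top. \<epsilon> < lap_right H x0 (b - x0) s"
      using pos[of x0] x0 x0d cd by auto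
    have cH: "continuous_on {x0..x0 + (b - x0)} H"
      by (rule continuous_on_subset[OF H]) (use x0 cd in auto)
    have "((\<lambda>s. lap_right H x0 (b - x0) s - lap_right H x0 (d - x0) s) \<longlongrightarrow> 0) at_top"
      by (rule tendsto_lap_right_window[OF cH]) (use x0d cd in auto)
    then have small: "\<forall>\<^sub>F s in at_top. lap_right H x0 (b - x0) s - lap_right H x0 (d - x0) s < \<epsilon>"
      using \<epsilon> by (rule order_tendstoD(2))
    have nonpos: "lap_right H x0 (d - x0) s \<le> 0" for s
    proof -
      have "lap_right H x0 (d - x0) s \<le> lap_right (\<lambda>_. 0) x0 (d - x0) s"
        by (rule lap_right_mono) (use x0 max H cd in \<open>auto intro: continuous_on_subset\<close>)
      then show ?thesis
        by simp
    qed
    from big small have "\<forall>\<^sub>F s in at_top. 0 < lap_right H x0 (d - x0) s"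
      by eventually_elim simp
    then obtain N where "\<forall>s\<ge>N. 0 < lap_right H x0 (d - x0) s"
      unfolding eventually_at_top_linorder by blast
    then have "0 < lap_right H x0 (d - x0) N"
      using order_refl by blast
    with nonpos[of N] show False
      by linarith
  qed
qed

lemma eventually_lap_right_add_linear_gt:
  fixes G :: "real \<Rightarrow> real"
  assumes G: "continuous_on {x..x+w} G" and w: "0 < w" and \<epsilon>: "0 < \<epsilon>"
    and nonneg: "0 \<le> Liminf at_top (\<lambda>s. ereal (lap_right G x w s))"
  shows "\<forall>\<^sub>F s in at_top. \<epsilon> / 2 < lap_right (\<lambda>y. G y + \<epsilon> * y) x w s"
proof -
  have "\<forall>\<^sub>F s in at_top. 0 - \<epsilon>/4 < lap_right G x w s"
    using nonneg \<epsilon> unfolding zero_ereal_def ereal_le_Liminf_iff by simp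
  moreover have "\<forall>\<^sub>F s in at_top. 3 * \<epsilon> / 4 < lap_right (\<lambda>y. \<epsilon> * y) x w s"
    by (rule order_tendstoD(1)[OF tendsto_lap_right_linear[OF w]]) (use \<epsilon> in simp)
  ultimately show ?thesis
  proof eventually_elim
    case (elim s)
    have "lap_right (\<lambda>y. G y + \<epsilon> * y) x w s = lap_right G x w s + lap_right (\<lambda>y. \<epsilon> * y) x w s"
      by (rule lap_right_add[OF G]) (intro continuous_intros)
    with elim show ?case
      by simp
  qed
qed

text \<open>Add \<open>\<epsilon> y\<close> to make the lower Laplace derivate positive, then let \<open>\<epsilon> \<rightarrow> 0\<close>.\<close>

lemma mono_on_if_Liminf_lap_right_nonneg:
  fixes G :: "real \<Rightarrow> real"
  assumes G: "continuous_on {a..b} G"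
    and nonneg: "\<And>y. y \<in> {a..<b} \<Longrightarrow> 0 \<le> Liminf at_top (\<lambda>s. ereal (lap_right G y (b - y) s))"
  shows "mono_on {a..b} G"
proof (rule mono_onI)
  fix c d assume cd: "c \<in> {a..b}" "d \<in> {a..b}" "c \<le> d"
  have approx: "G c \<le> G d + \<epsilon> * (d - c)" if \<epsilon>: "\<epsilon> > 0" for \<epsilon>
  proof -
    have "mono_on {a..b} (\<lambda>y. G y + \<epsilon> * y)"
    proof (rule mono_on_if_lap_right_eventually_pos)
      show "continuous_on {a..b} (\<lambda>y. G y + \<epsilon> * y)"
        by (intro continuous_intros G)
    next
      fix y assume y: "y \<in> {a..<b}"
      have "continuous_on {y..y + (b - y)} G"
        by (rule continuous_on_subset[OF G]) (use y in auto)
      from eventually_lap_right_add_linear_gt[OF this _ \<epsilon> nonneg[OF y]] y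
      have "\<forall>\<^sub>F s in at_top. \<epsilon> / 2 < lap_right (\<lambda>y. G y + \<epsilon> * y) y (b - y) s"
        by simp
      with \<epsilon> show "\<exists>\<epsilon>'>0. \<forall>\<^sub>F s in at_top. \<epsilon>' < lap_right (\<lambda>y. G y + \<epsilon> * y) y (b - y) s"
        by (intro exI[of _ "\<epsilon> / 2"]) simp
    qed
    from mono_onD[OF this cd] show ?thesis
      by (simp add: right_diff_distrib)
  qed
  show "G c \<le> G d"
  proof (rule field_le_epsilon)
    fix e :: real assume e: "e > 0"
    have "G c \<le> G d + e / (d - c + 1) * (d - c)"
      by (rule approx) (use e cd in simp)
    also have "e / (d - c + 1) * (d - c) \<le> e"
      using e cd by (simp add: field_simps)
    finally show "G c \<le> G d + e"
      by simp
  qed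
qed

lemma mono_on_laplace_major_minus_minor:
  assumes ab: "a < b" and U: "laplace_major f a b U" and V: "laplace_minor f a b V"
  shows "mono_on {a..b} (\<lambda>y. U y - V y)"
proof (rule mono_on_if_Liminf_lap_right_nonneg)
  have cU: "continuous_on {a..b} U" and cV: "continuous_on {a..b} V"
    using U V unfolding laplace_major_iff[OF ab] laplace_minor_iff[OF ab] by simp_all
  then show "continuous_on {a..b} (\<lambda>y. U y - V y)"
    by (intro continuous_intros)
  fix y assume y: "y \<in> {a..<b}"
  have "ereal (f y) \<le> Liminf at_top (\<lambda>s. ereal (lap_right U y (b - y) s))"
    by (rule laplace_major_Liminf_lap_right[OF U ab y]) (use y in auto)
  moreover have "Limsup at_top (\<lambda>s. ereal (lap_right V y (b - y) s)) \<le> ereal (f y)"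
    by (rule laplace_minor_Limsup_lap_right[OF V ab y]) (use y in auto)
  moreover have diff: "lap_right (\<lambda>y. U y - V y) y (b - y) s = lap_right U y (b - y) s - lap_right V y (b - y) s" for s
    by (rule lap_right_diff; rule continuous_on_subset[OF cU] continuous_on_subset[OF cV]) (use y in auto)
  ultimately show "0 \<le> Liminf at_top (\<lambda>s. ereal (lap_right (\<lambda>y. U y - V y) y (b - y) s))"
    unfolding zero_ereal_def ereal_le_Liminf_iff Limsup_le_ereal_iff
  proof (intro allI impI)
    fix \<epsilon> :: real assume R: "\<forall>\<epsilon>>0. \<forall>\<^sub>F s in at_top. f y - \<epsilon> < lap_right U y (b - y) s"
      and L: "\<forall>\<epsilon>>0. \<forall>\<^sub>F s in at_top. lap_right V y (b - y) s < f y + \<epsilon>" and \<epsilon>: "\<epsilon> > 0"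
    from R \<epsilon> have "\<forall>\<^sub>F s in at_top. f y - \<epsilon>/2 < lap_right U y (b - y) s"
      by simp
    moreover from L \<epsilon> have "\<forall>\<^sub>F s in at_top. lap_right V y (b - y) s < f y + \<epsilon>/2"
      by simp
    ultimately show "\<forall>\<^sub>F s in at_top. 0 - \<epsilon> < lap_right (\<lambda>y. U y - V y) y (b - y) s"
      by eventually_elim (simp add: diff)
  qed
qed

section \<open>Points of large symmetric growth\<close>

definition steep_points :: "(real \<Rightarrow> real) \<Rightarrow> real \<Rightarrow> real set" where
  "steep_points G \<eta> = {x. \<exists>\<^sub>F h in at_right 0. \<eta> * h < G (x + h) - G (x - h)}"

lemma steep_points_antimono:
  assumes "\<eta>' \<le> \<eta>"
  shows "steep_points G \<eta> \<subseteq> steep_points G \<eta>'"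
proof
  fix x assume "x \<in> steep_points G \<eta>"
  then have "\<exists>\<^sub>F h in at_right 0. \<eta> * h < G (x + h) - G (x - h)"
    unfolding steep_points_def by simp
  moreover have "\<forall>\<^sub>F h in at_right 0. \<eta> * h < G (x + h) - G (x - h) \<longrightarrow> \<eta>' * h < G (x + h) - G (x - h)"
    using eventually_at_right_less[of 0]
  proof (rule eventually_mono)
    fix h :: real assume "0 < h"
    then have "\<eta>' * h \<le> \<eta> * h"
      using assms by (rule mult_right_mono[OF _ less_imp_le, rotated])
    then show "\<eta> * h < G (x + h) - G (x - h) \<longrightarrow> \<eta>' * h < G (x + h) - G (x - h)"
      by linarith
  qed
  ultimately show "x \<in> steep_points G \<eta>'"
    unfolding steep_points_def by (simp add: frequently_rev_mp)
qed

text \<open>Comparing Lebesgue measure with the Lebesgue--Stieltjes measure of \<open>G\<close> ball by ball.\<close>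

lemma emeasure_disjoint_steep_cballs:
  fixes G :: "real \<Rightarrow> real"
  assumes mono: "\<And>x y. x \<le> y \<Longrightarrow> G x \<le> G y" and cont: "continuous_on UNIV G"
    and \<eta>: "\<eta> > 0" and ab: "a \<le> b"
    and C: "countable C" "disjoint_family_on (\<lambda>i. cball (fst i) (snd i)) C"
    and balls: "\<And>x h. (x, h) \<in> C \<Longrightarrow> 0 < h \<and> cball x h \<subseteq> {a..b} \<and> \<eta> * h \<le> G (x + h) - G (x - h)"
  shows "emeasure lebesgue (\<Union>i\<in>C. cball (fst i) (snd i)) \<le> ennreal (2 * (G b - G a) / \<eta>)"
proof -
  let ?X = "\<lambda>i. cball (fst i) (snd i)" and ?\<nu> = "interval_measure G"
  have \<nu>_Icc: "emeasure ?\<nu> {u..v} = ennreal (G v - G u)" if "u \<le> v" for u v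
    using emeasure_interval_measure_Icc[OF that mono cont] .
  have "emeasure lebesgue (\<Union>i\<in>C. ?X i) = (\<integral>\<^sup>+i. emeasure lebesgue (?X i) \<partial>count_space C)"
    by (rule emeasure_UN_countable[OF _ C]) (simp add: borel_closed)
  also have "\<dots> \<le> (\<integral>\<^sup>+i. ennreal (2/\<eta>) * emeasure ?\<nu> (?X i) \<partial>count_space C)"
  proof (rule nn_integral_mono)
    fix i assume "i \<in> space (count_space C)"
    then obtain x h where i: "i = (x, h)" and xh: "(x, h) \<in> C"
      by (cases i) simp
    from balls[OF xh] have h: "0 < h" and steep: "\<eta> * h \<le> G (x + h) - G (x - h)"
      by simp_all
    have "emeasure lebesgue (?X i) = ennreal (2 * h)"
      using h unfolding i by (simp add: cball_eq_atLeastAtMost)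
    also have "\<dots> \<le> ennreal (2/\<eta> * (G (x + h) - G (x - h)))"
      using steep \<eta> by (intro ennreal_leI) (simp add: field_simps)
    also have "\<dots> = ennreal (2/\<eta>) * ennreal (G (x + h) - G (x - h))"
      using mono[of "x - h" "x + h"] h \<eta> by (intro ennreal_mult) simp_all
    also have "ennreal (G (x + h) - G (x - h)) = emeasure ?\<nu> (?X i)"
      using h unfolding i by (simp add: cball_eq_atLeastAtMost \<nu>_Icc)
    finally show "emeasure lebesgue (?X i) \<le> ennreal (2/\<eta>) * emeasure ?\<nu> (?X i)" .
  qed
  also have "\<dots> = ennreal (2/\<eta>) * emeasure ?\<nu> (\<Union>i\<in>C. ?X i)"
    by (simp add: nn_integral_cmult emeasure_UN_countable[OF _ C] borel_closed)
  also have "\<dots> \<le> ennreal (2/\<eta>) * emeasure ?\<nu> {a..b}"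
  proof (intro mult_left_mono emeasure_mono)
    show "(\<Union>i\<in>C. ?X i) \<subseteq> {a..b}"
      using balls by fastforce
  qed simp_all
  also have "\<dots> = ennreal (2 * (G b - G a) / \<eta>)"
    using \<eta> mono[OF ab] by (simp add: \<nu>_Icc[OF ab] ennreal_mult[symmetric])
  finally show ?thesis .
qed

lemma mono_continuous_extension:
  fixes G :: "real \<Rightarrow> real"
  assumes ab: "a \<le> b" and mono: "mono_on {a..b} G" and cont: "continuous_on {a..b} G"
  obtains G' where "mono G'" "continuous_on UNIV G'" "\<And>y. y \<in> {a..b} \<Longrightarrow> G' y = G y"
proof
  show "mono (\<lambda>y. G (max a (min b y)))"
    by (intro monoI mono_onD[OF mono]) (use ab in auto)
  show "continuous_on UNIV (\<lambda>y. G (max a (min b y)))"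
    by (rule continuous_on_compose2[OF cont], intro continuous_intros) (use ab in auto)
  show "G (max a (min b y)) = G y" if "y \<in> {a..b}" for y
    using that by simp
qed

lemma steep_cball_exists:
  assumes x: "x \<in> steep_points G \<eta> \<inter> {a<..<b}" and d: "0 < d"
  shows "\<exists>h. 0 < h \<and> h < d \<and> cball x h \<subseteq> {a..b} \<and> \<eta> * h \<le> G (x + h) - G (x - h)"
proof -
  have "\<exists>\<^sub>F h in at_right 0. \<eta> * h < G (x + h) - G (x - h)"
    using x unfolding steep_points_def by simp
  moreover have "\<forall>\<^sub>F h in at_right 0. 0 < h \<and> h < d \<and> h \<le> x - a \<and> h \<le> b - x"
    unfolding eventually_at_right_field
    by (rule exI[of _ "min d (min (x - a) (b - x))"]) (use x d in simp)
  ultimately have "\<exists>\<^sub>F h in at_right 0. (0 < h \<and> h < d \<and> h \<le> x - a \<and> h \<le> b - x)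
      \<and> \<eta> * h < G (x + h) - G (x - h)"
    by (rule frequently_eventually_conj)
  then obtain h where "0 < h" "h < d" "h \<le> x - a" "h \<le> b - x" "\<eta> * h < G (x + h) - G (x - h)"
    by (auto dest: frequently_ex)
  then show ?thesis
    by (intro exI[of _ h]) (simp add: cball_eq_atLeastAtMost)
qed

lemma steep_points_disjoint_cballs:
  obtains C where "countable C" "disjoint_family_on (\<lambda>i. cball (fst i) (snd i)) C"
    "\<And>x h. (x, h) \<in> C \<Longrightarrow> 0 < h \<and> cball x h \<subseteq> {a..b} \<and> \<eta> * h \<le> G (x + h) - G (x - h)"
    "negligible (steep_points G \<eta> \<inter> {a<..<b} - (\<Union>i\<in>C. cball (fst i) (snd i)))"
proof -
  define K where "K = {(x, h). 0 < h \<and> cball x h \<subseteq> {a..b} \<and> \<eta> * h \<le> G (x + h) - G (x - h)}"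
  obtain C where C: "countable C" "C \<subseteq> K"
      "pairwise (\<lambda>i j. disjnt (cball (fst i) (snd i)) (cball (fst j) (snd j))) C"
      "negligible (steep_points G \<eta> \<inter> {a<..<b} - (\<Union>i\<in>C. cball (fst i) (snd i)))"
  proof (rule Vitali_covering_theorem_cballs[of K snd _ fst])
    show "0 < snd i" if "i \<in> K" for i
      using that unfolding K_def by (cases i) simp
    show "\<exists>i. i \<in> K \<and> x \<in> cball (fst i) (snd i) \<and> snd i < d"
      if x: "x \<in> steep_points G \<eta> \<inter> {a<..<b}" and d: "0 < d" for x d
    proof -
      obtain h where "0 < h" "h < d" "cball x h \<subseteq> {a..b}" "\<eta> * h \<le> G (x + h) - G (x - h)"
        using steep_cball_exists[OF x d] by blast
      then show ?thesis
        by (intro exI[of _ "(x, h)"]) (simp add: K_def)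
    qed
  qed blast+
  have "disjoint_family_on (\<lambda>i. cball (fst i) (snd i)) C"
    using C(3) unfolding disjoint_family_on_def pairwise_def disjnt_def by blast
  moreover have "0 < h \<and> cball x h \<subseteq> {a..b} \<and> \<eta> * h \<le> G (x + h) - G (x - h)" if "(x, h) \<in> C" for x h
    using C(2) that unfolding K_def by blast
  ultimately show ?thesis
    using that C(1,4) by blast
qed

lemma steep_points_Vitali_cover:
  fixes G :: "real \<Rightarrow> real"
  assumes ab: "a \<le> b" and mono: "mono_on {a..b} G" and cont: "continuous_on {a..b} G"
    and \<eta>: "\<eta> > 0"
  obtains B where "negligible (steep_points G \<eta> \<inter> {a<..<b} - B)" "B \<in> sets lebesgue" "B \<subseteq> {a..b}"
    "emeasure lebesgue B \<le> ennreal (2 * (G b - G a) / \<eta>)"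
proof -
  obtain C where C: "countable C" "disjoint_family_on (\<lambda>i. cball (fst i) (snd i)) C"
    and balls: "\<And>x h. (x, h) \<in> C \<Longrightarrow> 0 < h \<and> cball x h \<subseteq> {a..b} \<and> \<eta> * h \<le> G (x + h) - G (x - h)"
    and null: "negligible (steep_points G \<eta> \<inter> {a<..<b} - (\<Union>i\<in>C. cball (fst i) (snd i)))"
    by (rule steep_points_disjoint_cballs[where a = a and b = b and \<eta> = \<eta> and G = G]) blast
  define B where "B = (\<Union>i\<in>C. cball (fst i) (snd i))"
  have B_sub: "B \<subseteq> {a..b}"
    unfolding B_def using balls by fastforce
  obtain G' where G': "mono G'" "continuous_on UNIV G'" "\<And>y. y \<in> {a..b} \<Longrightarrow> G' y = G y"
    using mono_continuous_extension[OF ab mono cont] by blast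
  have "emeasure lebesgue B \<le> ennreal (2 * (G' b - G' a) / \<eta>)"
    unfolding B_def
  proof (rule emeasure_disjoint_steep_cballs[OF monoD[OF G'(1)] G'(2) \<eta> ab C])
    fix x h assume "(x, h) \<in> C"
    from balls[OF this] have "0 < h" "a \<le> x - h" "x + h \<le> b" "\<eta> * h \<le> G (x + h) - G (x - h)"
      by (simp_all add: cball_eq_atLeastAtMost)
    then show "0 < h \<and> cball x h \<subseteq> {a..b} \<and> \<eta> * h \<le> G' (x + h) - G' (x - h)"
      using G'(3)[of "x + h"] G'(3)[of "x - h"] by (simp add: cball_eq_atLeastAtMost)
  qed
  moreover have "G' a = G a" "G' b = G b"
    using G'(3) ab by simp_all
  ultimately have B_measure: "emeasure lebesgue B \<le> ennreal (2 * (G b - G a) / \<eta>)"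
    by simp
  have B_sets: "B \<in> sets lebesgue"
    unfolding B_def by (intro sets.countable_UN'[OF C(1)] image_subsetI fmeasurableD lmeasurable_cball)
  show ?thesis
    using null B_sets B_sub B_measure unfolding B_def by (rule that)
qed

lemma steep_points_outer_measure:
  fixes G :: "real \<Rightarrow> real"
  assumes ab: "a \<le> b" and mono: "mono_on {a..b} G" and cont: "continuous_on {a..b} G"
    and \<eta>: "\<eta> > 0"
  obtains T where "steep_points G \<eta> \<inter> {a<..<b} \<subseteq> T" "T \<in> lmeasurable"
    "measure lebesgue T \<le> 2 * (G b - G a) / \<eta>"
proof -
  define S where "S = steep_points G \<eta> \<inter> {a<..<b}"
  obtain B where null: "negligible (S - B)" and B: "B \<in> sets lebesgue" "B \<subseteq> {a..b}"
    and B_measure: "emeasure lebesgue B \<le> ennreal (2 * (G b - G a) / \<eta>)"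
    by (rule steep_points_Vitali_cover[OF ab mono cont \<eta>, folded S_def])
  define T where "T = (S - B) \<union> B"
  have null: "S - B \<in> null_sets lebesgue"
    using null by (simp add: negligible_iff_null_sets)
  have "T \<in> sets lebesgue"
    unfolding T_def using null_setsD2[OF null] B(1) by (rule sets.Un)
  moreover have "T \<subseteq> {a..b}"
    using B(2) unfolding T_def S_def by auto
  ultimately have T: "T \<in> lmeasurable"
    by (intro bounded_set_imp_lmeasurable bounded_subset[OF bounded_closed_interval])
  have "emeasure lebesgue T \<le> emeasure lebesgue (S - B) + emeasure lebesgue B"
    unfolding T_def by (rule emeasure_subadditive) (use null B in auto)
  also have "\<dots> \<le> ennreal (2 * (G b - G a) / \<eta>)"
    using null_setsD1[OF null] B_measure by simp
  finally have "ennreal (measure lebesgue T) \<le> ennreal (2 * (G b - G a) / \<eta>)"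
    using emeasure_eq_ennreal_measure[OF fmeasurableD2[OF T]] by simp
  moreover have "0 \<le> 2 * (G b - G a) / \<eta>"
    using mono_onD[OF mono, of a b] ab \<eta> by simp
  ultimately have "measure lebesgue T \<le> 2 * (G b - G a) / \<eta>"
    by (simp add: ennreal_le_iff)
  moreover have "S \<subseteq> T"
    unfolding T_def by blast
  ultimately show ?thesis
    using T that unfolding S_def by blast
qed

section \<open>Squeezing the Laplace transform\<close>

lemma Limsup_lap_right_le_if_growth:
  fixes g :: "real \<Rightarrow> real"
  assumes g: "continuous_on {x..x+d} g" and d: "0 < d" and \<eta>: "0 \<le> \<eta>"
    and growth: "\<forall>\<^sub>F t in at_right 0. g (x + t) - g x \<le> \<eta> * t"
  shows "Limsup at_top (\<lambda>s. ereal (lap_right g x d s)) \<le> ereal \<eta>"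
proof -
  obtain \<delta>0 where \<delta>0: "\<delta>0 > 0" "\<And>t. 0 < t \<Longrightarrow> t < \<delta>0 \<Longrightarrow> g (x + t) - g x \<le> \<eta> * t"
    using growth unfolding eventually_at_right_field by auto
  define \<delta> where "\<delta> = min (\<delta>0 / 2) d"
  have \<delta>: "0 < \<delta>" "\<delta> \<le> d"
    using \<delta>0(1) d unfolding \<delta>_def by simp_all
  have near: "g (x + t) - g x \<le> \<eta> * t" if "t \<in> {0..\<delta>}" for t
  proof (cases "t = 0")
    case False
    with that \<delta>0(1) show ?thesis
      by (intro \<delta>0(2)) (simp_all add: \<delta>_def)
  qed simp
  show ?thesis
    unfolding Limsup_le_ereal_iff
  proof (intro allI impI)
    fix \<epsilon> :: real assume \<epsilon>: "\<epsilon> > 0"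
    have "\<forall>\<^sub>F s in at_top. lap_right g x d s - lap_right g x \<delta> s < \<epsilon>"
      using order_tendstoD(2)[OF tendsto_lap_right_window[OF g \<delta>] \<epsilon>] by simp
    then show "\<forall>\<^sub>F s in at_top. lap_right g x d s < \<eta> + \<epsilon>"
      using eventually_gt_at_top[of 0]
    proof eventually_elim
      case (elim s)
      have "lap_right g x \<delta> s \<le> \<eta>"
        by (rule lap_right_le_if_increment_le[OF continuous_on_subset[OF g] _ elim(2) \<eta> near])
           (use \<delta> in auto)
      with elim(1) show ?case
        by simp
    qed
  qed
qed

text \<open>Sandwich: \<open>lap_right F = lap_right U - lap_right (U - F) = lap_right V + lap_right (F - V)\<close>.\<close>

lemma tendsto_lap_right_squeeze:
  fixes F :: "real \<Rightarrow> real"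
  assumes F: "continuous_on {x..x+d} F" and d: "0 < d"
    and squeeze: "\<And>\<eta>. \<eta> > 0 \<Longrightarrow> \<exists>U V. continuous_on {x..x+d} U \<and> continuous_on {x..x+d} V \<and>
        ereal c \<le> Liminf at_top (\<lambda>s. ereal (lap_right U x d s)) \<and>
        Limsup at_top (\<lambda>s. ereal (lap_right V x d s)) \<le> ereal c \<and>
        (\<forall>\<^sub>F t in at_right 0. (U (x + t) - F (x + t)) - (U x - F x) \<le> \<eta> * t) \<and>
        (\<forall>\<^sub>F t in at_right 0. (F (x + t) - V (x + t)) - (F x - V x) \<le> \<eta> * t)"
  shows "((\<lambda>s. lap_right F x d s) \<longlongrightarrow> c) at_top"
  unfolding tendsto_iff dist_real_def
proof (intro allI impI)
  fix \<epsilon> :: real assume \<epsilon>: "\<epsilon> > 0"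
  then obtain U V where U: "continuous_on {x..x+d} U" and V: "continuous_on {x..x+d} V"
    and LU: "ereal c \<le> Liminf at_top (\<lambda>s. ereal (lap_right U x d s))"
    and LV: "Limsup at_top (\<lambda>s. ereal (lap_right V x d s)) \<le> ereal c"
    and gU: "\<forall>\<^sub>F t in at_right 0. (U (x + t) - F (x + t)) - (U x - F x) \<le> \<epsilon>/2 * t"
    and gV: "\<forall>\<^sub>F t in at_right 0. (F (x + t) - V (x + t)) - (F x - V x) \<le> \<epsilon>/2 * t"
    using squeeze[of "\<epsilon>/2"] by auto
  have cUF: "continuous_on {x..x+d} (\<lambda>y. U y - F y)"
    by (intro continuous_intros U F)
  have cFV: "continuous_on {x..x+d} (\<lambda>y. F y - V y)"
    by (intro continuous_intros F V)
  have UF_small: "\<forall>\<^sub>F s in at_top. lap_right (\<lambda>y. U y - F y) x d s < \<epsilon>/2 + \<epsilon>/4"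
    using Limsup_lap_right_le_if_growth[OF cUF d _ gU, unfolded Limsup_le_ereal_iff, rule_format, of "\<epsilon>/4"]
      \<epsilon> by simp
  have FV_small: "\<forall>\<^sub>F s in at_top. lap_right (\<lambda>y. F y - V y) x d s < \<epsilon>/2 + \<epsilon>/4"
    using Limsup_lap_right_le_if_growth[OF cFV d _ gV, unfolded Limsup_le_ereal_iff, rule_format, of "\<epsilon>/4"]
      \<epsilon> by simp
  have U_large: "\<forall>\<^sub>F s in at_top. c - \<epsilon>/4 < lap_right U x d s"
    using LU \<epsilon> unfolding ereal_le_Liminf_iff by simp
  have V_small: "\<forall>\<^sub>F s in at_top. lap_right V x d s < c + \<epsilon>/4"
    using LV \<epsilon> unfolding Limsup_le_ereal_iff by simp
  from UF_small FV_small U_large V_small show "\<forall>\<^sub>F s in at_top. \<bar>lap_right F x d s - c\<bar> < \<epsilon>"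
  proof eventually_elim
    case (elim s)
    moreover have "lap_right (\<lambda>y. U y - F y) x d s = lap_right U x d s - lap_right F x d s"
      by (rule lap_right_diff[OF U F])
    moreover have "lap_right (\<lambda>y. F y - V y) x d s = lap_right F x d s - lap_right V x d s"
      by (rule lap_right_diff[OF F V])
    ultimately show ?case
      by (simp add: abs_less_iff)
  qed
qed

lemma growth_if_not_steep:
  fixes g :: "real \<Rightarrow> real"
  assumes mono: "mono_on {a..b} g" and x: "x \<in> {a<..<b}" and not_steep: "x \<notin> steep_points g \<eta>"
  shows "\<forall>\<^sub>F t in at_right 0. g (x + t) - g x \<le> \<eta> * t"
    and "\<forall>\<^sub>F t in at_right 0. g x - g (x - t) \<le> \<eta> * t"
proof -
  have "\<forall>\<^sub>F t in at_right 0. g (x + t) - g (x - t) \<le> \<eta> * t"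
    using not_steep unfolding steep_points_def by (simp add: not_frequently not_less)
  moreover have "\<forall>\<^sub>F t in at_right 0. 0 < t \<and> t < min (x - a) (b - x)"
    unfolding eventually_at_right_field by (rule exI[of _ "min (x - a) (b - x)"]) (use x in simp)
  ultimately have "\<forall>\<^sub>F t in at_right 0. g (x + t) - g (x - t) \<le> \<eta> * t \<and> g (x - t) \<le> g x \<and> g x \<le> g (x + t)"
  proof eventually_elim
    case (elim t)
    with x mono_onD[OF mono, of "x - t" x] mono_onD[OF mono, of x "x + t"] show ?case
      by simp
  qed
  then show "\<forall>\<^sub>F t in at_right 0. g (x + t) - g x \<le> \<eta> * t"
    and "\<forall>\<^sub>F t in at_right 0. g x - g (x - t) \<le> \<eta> * t"
    by (eventually_elim, linarith)+
qed

section \<open>The indefinite Laplace integral\<close>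

lemma laplace_integrable_major_minorE:
  assumes "laplace_integrable f a b" "\<epsilon> > 0"
  obtains U V where "laplace_major f a b U" "laplace_minor f a b V" "(U b - U a) - (V b - V a) < \<epsilon>"
proof -
  from assms(1) obtain r where r: "laplace_upper f a b = ereal r" "laplace_lower f a b = ereal r"
    unfolding laplace_integrable_def by (cases "laplace_upper f a b") auto
  have "laplace_upper f a b < ereal (r + \<epsilon>/2)"
    using r assms(2) by simp
  then obtain U where U: "laplace_major f a b U" "ereal (U b - U a) < ereal (r + \<epsilon>/2)"
    unfolding laplace_upper_def by (auto simp: INF_less_iff)
  have "ereal (r - \<epsilon>/2) < laplace_lower f a b"
    using r assms(2) by simp
  then obtain V where V: "laplace_minor f a b V" "ereal (r - \<epsilon>/2) < ereal (V b - V a)"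
    unfolding laplace_lower_def by (auto simp: less_SUP_iff)
  from U V show ?thesis
    by (intro that[of U V]) simp_all
qed

locale laplace_primitive =
  fixes f F :: "real \<Rightarrow> real" and a b :: real
  assumes a_less_b: "a < b"
    and integrable: "laplace_integrable f a b"
    and F_a: "F a = 0"
    and F_eq: "\<forall>x\<in>{a<..b}. F x = laplace_integral f a x"
begin

lemma F_between:
  assumes U: "laplace_major f a b U" and V: "laplace_minor f a b V" and x: "x \<in> {a..b}"
  shows "V x - V a \<le> F x" and "F x \<le> U x - U a"
proof -
  have "V x - V a \<le> F x \<and> F x \<le> U x - U a"
  proof (cases "x = a")
    case True
    then show ?thesis
      using F_a by simp
  next
    case False
    with x have ax: "a < x" "x \<le> b"
      by auto
    define L where "L = laplace_upper f a x"
    have F_L: "F x = real_of_ereal L"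
      using F_eq ax unfolding L_def laplace_integral_def by simp
    have upper: "L \<le> ereal (U x - U a)"
      unfolding L_def laplace_upper_def
      by (rule INF_lower) (use laplace_major_restrict[OF U ax] in simp)
    have V': "laplace_minor f a x V"
      by (rule laplace_minor_restrict[OF V ax])
    have lower: "ereal (V x - V a) \<le> L"
      unfolding L_def laplace_upper_def
    proof (rule INF_greatest)
      fix U' assume "U' \<in> {U. laplace_major f a x U}"
      then have "mono_on {a..x} (\<lambda>y. U' y - V y)"
        using mono_on_laplace_major_minus_minor[OF ax(1) _ V'] by simp
      from mono_onD[OF this, of a x] ax show "ereal (V x - V a) \<le> ereal (U' x - U' a)"
        by simp
    qed
    from upper lower show ?thesis
      unfolding F_L by (cases L) simp_all
  qed
  then show "V x - V a \<le> F x" and "F x \<le> U x - U a"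
    by simp_all
qed

lemma mono_on_major_minus_F:
  assumes U: "laplace_major f a b U"
  shows "mono_on {a..b} (\<lambda>y. U y - F y)"
proof (rule mono_onI)
  fix x y assume xy: "x \<in> {a..b}" "y \<in> {a..b}" "x \<le> y"
  show "U x - F x \<le> U y - F y"
  proof (rule field_le_epsilon)
    fix e :: real assume "e > 0"
    with integrable obtain U' V' where U'V': "laplace_major f a b U'" "laplace_minor f a b V'"
      "(U' b - U' a) - (V' b - V' a) < e"
      by (rule laplace_integrable_major_minorE)
    have "F y \<le> U' y - U' a" "V' x - V' a \<le> F x"
      using F_between[OF U'V'(1,2)] xy by simp_all
    moreover have "U' y - V' y \<le> U' b - V' b"
      using mono_onD[OF mono_on_laplace_major_minus_minor[OF a_less_b U'V'(1,2)], of y b] xy by simp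
    moreover have "U x - V' x \<le> U y - V' y"
      using mono_onD[OF mono_on_laplace_major_minus_minor[OF a_less_b U U'V'(2)], of x y] xy by simp
    ultimately show "U x - F x \<le> U y - F y + e"
      using U'V'(3) by linarith
  qed
qed

lemma mono_on_F_minus_minor:
  assumes V: "laplace_minor f a b V"
  shows "mono_on {a..b} (\<lambda>y. F y - V y)"
proof (rule mono_onI)
  fix x y assume xy: "x \<in> {a..b}" "y \<in> {a..b}" "x \<le> y"
  show "F x - V x \<le> F y - V y"
  proof (rule field_le_epsilon)
    fix e :: real assume "e > 0"
    with integrable obtain U' V' where U'V': "laplace_major f a b U'" "laplace_minor f a b V'"
      "(U' b - U' a) - (V' b - V' a) < e"
      by (rule laplace_integrable_major_minorE)
    have "V' y - V' a \<le> F y" "F x \<le> U' x - U' a"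
      using F_between[OF U'V'(1,2)] xy by simp_all
    moreover have "U' y - V' y \<le> U' b - V' b"
      using mono_onD[OF mono_on_laplace_major_minus_minor[OF a_less_b U'V'(1,2)], of y b] xy by simp
    moreover have "U' x - V x \<le> U' y - V y"
      using mono_onD[OF mono_on_laplace_major_minus_minor[OF a_less_b U'V'(1) V], of x y] xy by simp
    ultimately show "F x - V x \<le> F y - V y + e"
      using U'V'(3) by linarith
  qed
qed

lemma abs_F_diff_le:
  assumes U: "laplace_major f a b U" and V: "laplace_minor f a b V"
    and x: "x \<in> {a..b}" and y: "y \<in> {a..b}"
  shows "\<bar>F y - F x\<bar> \<le> \<bar>U y - U x\<bar> + \<bar>V y - V x\<bar>"
proof -
  have ordered: "\<bar>F v - F u\<bar> \<le> \<bar>U v - U u\<bar> + \<bar>V v - V u\<bar>"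
    if "u \<in> {a..b}" "v \<in> {a..b}" "u \<le> v" for u v
  proof -
    have "U u - F u \<le> U v - F v" "F u - V u \<le> F v - V v"
      using mono_onD[OF mono_on_major_minus_F[OF U] that]
        mono_onD[OF mono_on_F_minus_minor[OF V] that] by simp_all
    then show ?thesis
      unfolding abs_le_iff
      using abs_ge_self[of "U v - U u"] abs_ge_minus_self[of "V v - V u"]
        abs_ge_zero[of "U v - U u"] abs_ge_zero[of "V v - V u"] by linarith
  qed
  show ?thesis
  proof (cases "x \<le> y")
    case True
    then show ?thesis
      using ordered x y by simp
  next
    case False
    then have "\<bar>F x - F y\<bar> \<le> \<bar>U x - U y\<bar> + \<bar>V x - V y\<bar>"
      using ordered x y by simp
    then show ?thesis
      by (simp add: abs_minus_commute)
  qed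
qed

lemma continuous_on_F: "continuous_on {a..b} F"
  unfolding continuous_on_iff
proof (intro ballI allI impI)
  fix x e assume x: "x \<in> {a..b}" and e: "(0::real) < e"
  from integrable zero_less_one obtain U V where U: "laplace_major f a b U" and V: "laplace_minor f a b V"
    by (rule laplace_integrable_major_minorE)
  have cU: "continuous_on {a..b} U" and cV: "continuous_on {a..b} V"
    using U V unfolding laplace_major_iff[OF a_less_b] laplace_minor_iff[OF a_less_b] by simp_all
  obtain dU where dU: "dU > 0" "\<And>y. y \<in> {a..b} \<Longrightarrow> dist y x < dU \<Longrightarrow> dist (U y) (U x) < e/2"
    using cU x e unfolding continuous_on_iff by (meson half_gt_zero)
  obtain dV where dV: "dV > 0" "\<And>y. y \<in> {a..b} \<Longrightarrow> dist y x < dV \<Longrightarrow> dist (V y) (V x) < e/2"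
    using cV x e unfolding continuous_on_iff by (meson half_gt_zero)
  show "\<exists>d>0. \<forall>y\<in>{a..b}. dist y x < d \<longrightarrow> dist (F y) (F x) < e"
  proof (intro exI[of _ "min dU dV"] conjI ballI impI)
    fix y assume "y \<in> {a..b}" "dist y x < min dU dV"
    with dU(2)[of y] dV(2)[of y] abs_F_diff_le[OF U V x, of y] show "dist (F y) (F x) < e"
      unfolding dist_real_def by simp
  qed (use dU dV in simp)
qed

definition exceptional_points :: "real \<Rightarrow> real set" where
  "exceptional_points \<eta> = {x \<in> {a<..<b}. \<forall>U V. laplace_major f a b U \<longrightarrow> laplace_minor f a b V \<longrightarrow>
     x \<in> steep_points (\<lambda>y. U y - F y) \<eta> \<union> steep_points (\<lambda>y. F y - V y) \<eta>}"

lemma exceptional_points_antimono: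
  assumes "\<eta>' \<le> \<eta>"
  shows "exceptional_points \<eta> \<subseteq> exceptional_points \<eta>'"
  using steep_points_antimono[OF assms] unfolding exceptional_points_def by blast

lemma tendsto_lap_right_if_regular:
  assumes x: "x \<in> {a<..<b}" and d: "0 < d" "d \<le> b - x"
    and regular: "\<And>\<eta>. \<eta> > 0 \<Longrightarrow> x \<notin> exceptional_points \<eta>"
  shows "((\<lambda>s. lap_right F x d s) \<longlongrightarrow> f x) at_top"
proof (rule tendsto_lap_right_squeeze[OF _ d(1)])
  have sub: "{x..x+d} \<subseteq> {a..b}"
    using x d by auto
  show "continuous_on {x..x+d} F"
    by (rule continuous_on_subset[OF continuous_on_F sub])
  fix \<eta> :: real assume "\<eta> > 0"
  then obtain U V where U: "laplace_major f a b U" and V: "laplace_minor f a b V"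
    and nsU: "x \<notin> steep_points (\<lambda>y. U y - F y) \<eta>" and nsV: "x \<notin> steep_points (\<lambda>y. F y - V y) \<eta>"
    using regular x unfolding exceptional_points_def by blast
  have cU: "continuous_on {a..b} U" and cV: "continuous_on {a..b} V"
    using U V unfolding laplace_major_iff[OF a_less_b] laplace_minor_iff[OF a_less_b] by simp_all
  show "\<exists>U V. continuous_on {x..x+d} U \<and> continuous_on {x..x+d} V \<and>
      ereal (f x) \<le> Liminf at_top (\<lambda>s. ereal (lap_right U x d s)) \<and>
      Limsup at_top (\<lambda>s. ereal (lap_right V x d s)) \<le> ereal (f x) \<and>
      (\<forall>\<^sub>F t in at_right 0. (U (x + t) - F (x + t)) - (U x - F x) \<le> \<eta> * t) \<and>
      (\<forall>\<^sub>F t in at_right 0. (F (x + t) - V (x + t)) - (F x - V x) \<le> \<eta> * t)"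
  proof (rule exI[of _ U], rule exI[of _ V], intro conjI)
    show "continuous_on {x..x+d} U"
      by (rule continuous_on_subset[OF cU sub])
    show "continuous_on {x..x+d} V"
      by (rule continuous_on_subset[OF cV sub])
    show "ereal (f x) \<le> Liminf at_top (\<lambda>s. ereal (lap_right U x d s))"
      by (rule laplace_major_Liminf_lap_right[OF U a_less_b _ d]) (use x in simp)
    show "Limsup at_top (\<lambda>s. ereal (lap_right V x d s)) \<le> ereal (f x)"
      by (rule laplace_minor_Limsup_lap_right[OF V a_less_b _ d]) (use x in simp)
    show "\<forall>\<^sub>F t in at_right 0. (U (x + t) - F (x + t)) - (U x - F x) \<le> \<eta> * t"
      by (rule growth_if_not_steep(1)[OF mono_on_major_minus_F[OF U] x nsU])
    show "\<forall>\<^sub>F t in at_right 0. (F (x + t) - V (x + t)) - (F x - V x) \<le> \<eta> * t"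
      by (rule growth_if_not_steep(1)[OF mono_on_F_minus_minor[OF V] x nsV])
  qed
qed

lemma tendsto_lap_left_if_regular:
  assumes x: "x \<in> {a<..<b}" and d: "0 < d" "d \<le> x - a"
    and regular: "\<And>\<eta>. \<eta> > 0 \<Longrightarrow> x \<notin> exceptional_points \<eta>"
  shows "((\<lambda>s. lap_left F x d s) \<longlongrightarrow> f x) at_top"
  unfolding lap_left_eq_lap_right_reflect
proof (rule tendsto_lap_right_squeeze[OF _ d(1)])
  have sub: "{- x..- x + d} \<subseteq> {- b..- a}"
    using x d by auto
  show "continuous_on {- x..- x + d} (\<lambda>y. - F (- y))"
    by (rule continuous_on_reflect[OF continuous_on_F sub])
  fix \<eta> :: real assume "\<eta> > 0"
  then obtain U V where U: "laplace_major f a b U" and V: "laplace_minor f a b V"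
    and nsU: "x \<notin> steep_points (\<lambda>y. U y - F y) \<eta>" and nsV: "x \<notin> steep_points (\<lambda>y. F y - V y) \<eta>"
    using regular x unfolding exceptional_points_def by blast
  have cU: "continuous_on {a..b} U" and cV: "continuous_on {a..b} V"
    using U V unfolding laplace_major_iff[OF a_less_b] laplace_minor_iff[OF a_less_b] by simp_all
  show "\<exists>U V. continuous_on {- x..- x + d} U \<and> continuous_on {- x..- x + d} V \<and>
      ereal (f x) \<le> Liminf at_top (\<lambda>s. ereal (lap_right U (- x) d s)) \<and>
      Limsup at_top (\<lambda>s. ereal (lap_right V (- x) d s)) \<le> ereal (f x) \<and>
      (\<forall>\<^sub>F t in at_right 0. (U (- x + t) - - F (- (- x + t))) - (U (- x) - - F (- (- x))) \<le> \<eta> * t) \<and>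
      (\<forall>\<^sub>F t in at_right 0. (- F (- (- x + t)) - V (- x + t)) - (- F (- (- x)) - V (- x)) \<le> \<eta> * t)"
  proof (rule exI[of _ "\<lambda>y. - U (- y)"], rule exI[of _ "\<lambda>y. - V (- y)"], intro conjI)
    show "continuous_on {- x..- x + d} (\<lambda>y. - U (- y))"
      by (rule continuous_on_reflect[OF cU sub])
    show "continuous_on {- x..- x + d} (\<lambda>y. - V (- y))"
      by (rule continuous_on_reflect[OF cV sub])
    show "ereal (f x) \<le> Liminf at_top (\<lambda>s. ereal (lap_right (\<lambda>y. - U (- y)) (- x) d s))"
      by (rule laplace_major_Liminf_lap_left[OF U a_less_b _ d]) (use x in simp)
    show "Limsup at_top (\<lambda>s. ereal (lap_right (\<lambda>y. - V (- y)) (- x) d s)) \<le> ereal (f x)"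
      by (rule laplace_minor_Limsup_lap_left[OF V a_less_b _ d]) (use x in simp)
    show "\<forall>\<^sub>F t in at_right 0. (- U (- (- x + t)) - - F (- (- x + t))) - (- U (- (- x)) - - F (- (- x)))
        \<le> \<eta> * t"
      using growth_if_not_steep(2)[OF mono_on_major_minus_F[OF U] x nsU]
      by (rule eventually_mono) (simp add: algebra_simps)
    show "\<forall>\<^sub>F t in at_right 0. (- F (- (- x + t)) - - V (- (- x + t))) - (- F (- (- x)) - - V (- (- x)))
        \<le> \<eta> * t"
      using growth_if_not_steep(2)[OF mono_on_F_minus_minor[OF V] x nsV]
      by (rule eventually_mono) (simp add: algebra_simps)
  qed
qed

lemma has_LD_if_regular:
  assumes x: "x \<in> {a<..<b}"
    and regular: "\<And>\<eta>. \<eta> > 0 \<Longrightarrow> x \<notin> exceptional_points \<eta>"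
  shows "has_LD F a b x (f x)"
proof -
  define d where "d = min (b - x) (x - a)"
  have d: "0 < d" "d \<le> b - x" "d \<le> x - a"
    using x unfolding d_def by auto
  have "F integrable_on {x..x+d}"
    by (rule integrable_continuous_interval, rule continuous_on_subset[OF continuous_on_F]) (use x d in auto)
  moreover have "F integrable_on {x-d..x}"
    by (rule integrable_continuous_interval, rule continuous_on_subset[OF continuous_on_F]) (use x d in auto)
  moreover note tendsto_lap_right_if_regular[OF x d(1,2) regular]
    tendsto_lap_left_if_regular[OF x d(1,3) regular]
  ultimately show ?thesis
    unfolding has_LD_def using x d by (intro conjI exI[of _ d] impI) simp_all
qed

text \<open>A pair whose gap is below \<open>e \<eta> / 2\<close> already covers \<open>exceptional_points \<eta>\<close> by the steep
  points of \<open>U - F\<close> and \<open>F - V\<close>, whose outer measures add up to at most \<open>2 gap / \<eta>\<close>.\<close>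

lemma negligible_exceptional_points:
  assumes \<eta>: "\<eta> > 0"
  shows "negligible (exceptional_points \<eta>)"
  unfolding negligible_outer_le
proof (intro allI impI)
  fix e :: real assume e: "e > 0"
  with \<eta> have "e * \<eta> / 2 > 0"
    by simp
  with integrable obtain U V where U: "laplace_major f a b U" and V: "laplace_minor f a b V"
    and gap: "(U b - U a) - (V b - V a) < e * \<eta> / 2"
    by (rule laplace_integrable_major_minorE)
  have cU: "continuous_on {a..b} U" and cV: "continuous_on {a..b} V"
    using U V unfolding laplace_major_iff[OF a_less_b] laplace_minor_iff[OF a_less_b] by simp_all
  obtain T1 where T1: "steep_points (\<lambda>y. U y - F y) \<eta> \<inter> {a<..<b} \<subseteq> T1" "T1 \<in> lmeasurable"
      "measure lebesgue T1 \<le> 2 * ((U b - F b) - (U a - F a)) / \<eta>"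
    by (rule steep_points_outer_measure[OF less_imp_le[OF a_less_b] mono_on_major_minus_F[OF U] _ \<eta>])
       (intro continuous_intros cU continuous_on_F)
  obtain T2 where T2: "steep_points (\<lambda>y. F y - V y) \<eta> \<inter> {a<..<b} \<subseteq> T2" "T2 \<in> lmeasurable"
      "measure lebesgue T2 \<le> 2 * ((F b - V b) - (F a - V a)) / \<eta>"
    by (rule steep_points_outer_measure[OF less_imp_le[OF a_less_b] mono_on_F_minus_minor[OF V] _ \<eta>])
       (intro continuous_intros cV continuous_on_F)
  have "exceptional_points \<eta> \<subseteq> T1 \<union> T2"
    using U V T1(1) T2(1) unfolding exceptional_points_def by blast
  moreover have "T1 \<union> T2 \<in> lmeasurable"
    using T1(2) T2(2) by (rule fmeasurable.Un)
  moreover have "measure lebesgue (T1 \<union> T2) \<le> e"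
  proof -
    have "measure lebesgue (T1 \<union> T2) \<le> measure lebesgue T1 + measure lebesgue T2"
      using T1(2) T2(2) by (intro measure_Un_le fmeasurableD)
    also have "\<dots> \<le> 2 * ((U b - F b) - (U a - F a)) / \<eta> + 2 * ((F b - V b) - (F a - V a)) / \<eta>"
      using T1(3) T2(3) by (rule add_mono)
    also have "\<dots> = 2 * ((U b - U a) - (V b - V a)) / \<eta>"
      using \<eta> by (simp add: field_simps)
    also have "\<dots> \<le> e"
      using gap \<eta> by (simp add: field_simps)
    finally show ?thesis .
  qed
  ultimately show "\<exists>T. exceptional_points \<eta> \<subseteq> T \<and> T \<in> lmeasurable \<and> measure lebesgue T \<le> e"
    by blast
qed

lemma AE_has_LD: "AE x in lebesgue. x \<in> {a..b} \<longrightarrow> has_LD F a b x (f x)"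
proof -
  define N where "N = (\<Union>k. exceptional_points (1 / Suc k)) \<union> {a, b}"
  have "negligible (\<Union>k. exceptional_points (1 / Suc k))"
    by (rule negligible_countable_Union) (auto intro: negligible_exceptional_points)
  then have null: "N \<in> null_sets lebesgue"
    unfolding N_def negligible_iff_null_sets[symmetric] by simp
  have good: "has_LD F a b x (f x)" if x: "x \<in> {a..b}" "x \<notin> N" for x
  proof (rule has_LD_if_regular)
    show "x \<in> {a<..<b}"
      using x unfolding N_def by auto
    fix \<eta> :: real assume "\<eta> > 0"
    then obtain k where "inverse (real (Suc k)) < \<eta>"
      using reals_Archimedean by blast
    then have "exceptional_points \<eta> \<subseteq> exceptional_points (1 / Suc k)"
      by (intro exceptional_points_antimono) (simp add: inverse_eq_divide)
    with x show "x \<notin> exceptional_points \<eta>"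
      unfolding N_def by blast
  qed
  show ?thesis
  proof (rule AE_I'[OF null])
    show "{x \<in> space lebesgue. \<not> (x \<in> {a..b} \<longrightarrow> has_LD F a b x (f x))} \<subseteq> N"
      using good by blast
  qed
qed

end

theorem theorem5p5:
  fixes f F :: "real \<Rightarrow> real" and a b :: real
  assumes "a < b"
    and "laplace_integrable f a b"
    and "F a = 0"
    and "\<forall>x\<in>{a<..b}. F x = laplace_integral f a x"
  shows "AE x in lebesgue. x \<in> {a..b} \<longrightarrow> has_LD F a b x (f x)"
proof -
  interpret laplace_primitive f F a b
    using assms by unfold_locales
  show ?thesis
    by (rule AE_has_LD)
qed

end
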